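(* Let $g:\mathbb{Z}_{\ge0}\to\mathbb{R}$ satisfy $g(0)>0$ and $g(k)\le 0$ for all $k\ge1$ (an opponent process with $\tau_0=1$). Let $y_{\min}\in\mathbb{R}$, let gains satisfy $0<K_+\le g(0)^{-1}\le K_-$, and let $\delta>0$. Let $(y^{\mathrm{nat}}_t)_{t\ge0}$ be a real sequence and $u_0\ge0$ an initial dose such that $y_1:=g(0)u_0+y^{\mathrm{nat}}_1\ge y_{\min}$, and suppose $$y^{\mathrm{nat}}_{t+1}\ge y^{\mathrm{nat}}_t-g(t)\,u_0+\frac{\delta}{t}\qquad\text{for all }t\ge1.$$ For $t\ge1$ define $$u_t=\max\bigl\{0,\ u_{t-1}-K_+(y_t-y_{\min})_+-K_-(y_t-y_{\min})_-\bigr\},\qquad y_{t+1}=\sum_{k=0}^{t}g(k)\,u_{t-k}+y^{\mathrm{nat}}_{t+1},$$ where $(x)_+=\max(x,0)$, $(x)_-=\min(x,0)$. Then: (i) $u_t\le u_{t-1}$ for all $t\ge1$; (ii) $y_t\ge y_{\min}$ for all $t\ge1$; (iii) there exists a finite $T_0$ such that $u_t=0$ for all $t\ge T_0$.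
   Context: An opponent process with switching time $\tau_0=1$ is an impulse response $g$ with $g(0)>0$ and $g(\tau)\le0$ for all $\tau\ge1$. Doses are nonnegative. *)

theory Defs
  imports Complex_Main
begin

definition pos_part :: "real \<Rightarrow> real" where "pos_part x = max x 0"
definition neg_part :: "real \<Rightarrow> real" where "neg_part x = min x 0"

end

theory Submission
  imports Defs "HOL-Analysis.Harmonic_Numbers"
begin

text \<open>
  As long as the output stays above \<open>ymin\<close>, only the gain \<open>Kp\<close> acts and the doses are nonincreasing. Then every earlier dose change,
  being nonpositive, enters \<open>y (t + 1) - y t\<close> with a nonpositive weight \<open>g k\<close> and so
  contributes a nonnegative amount; the newest change contributes
  \<open>g 0 * (u t - u (t - 1)) \<ge> - g 0 * Kp * (y t - ymin) \<ge> - (y t - ymin)\<close>, and the natural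
  drift contributes at least \<open>\<delta> / t\<close>. Thus \<open>y (t + 1) \<ge> ymin + \<delta> / t\<close>, which by
  induction keeps the output above \<open>ymin\<close> and lowers each dose by at least \<open>Kp * \<delta> / t\<close>;
  divergence of the harmonic series drives the dose to zero.
\<close>

lemma convolution_Suc_diff:
  fixes g u :: "nat \<Rightarrow> 'a :: comm_ring"
  shows "(\<Sum>k=0..Suc m. g k * u (Suc m - k)) - (\<Sum>k=0..m. g k * u (m - k))
    = g 0 * (u (Suc m) - u m) + (\<Sum>k=1..m. g k * (u (Suc m - k) - u (m - k))) + g (Suc m) * u 0"
proof -
  have "(\<Sum>k=0..Suc m. g k * u (Suc m - k))
      = g 0 * u (Suc m) + (\<Sum>k=1..m. g k * u (Suc m - k)) + g (Suc m) * u 0"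
    by (simp add: sum.atLeast_Suc_atMost sum.cl_ivl_Suc del: sum.atLeast0_atMost_Suc)
  moreover have "(\<Sum>k=0..m. g k * u (m - k)) = g 0 * u m + (\<Sum>k=1..m. g k * u (m - k))"
    by (simp add: sum.atLeast_Suc_atMost)
  ultimately show ?thesis
    by (simp add: algebra_simps sum_subtractf)
qed

lemma convolution_Suc_diff_ge:
  fixes g u :: "nat \<Rightarrow> real"
  assumes g_nonpos: "\<And>k. 1 \<le> k \<Longrightarrow> k \<le> m \<Longrightarrow> g k \<le> 0"
    and u_decr: "\<And>j. j < m \<Longrightarrow> u (Suc j) \<le> u j"
  shows "(\<Sum>k=0..Suc m. g k * u (Suc m - k)) - (\<Sum>k=0..m. g k * u (m - k))
    \<ge> g 0 * (u (Suc m) - u m) + g (Suc m) * u 0"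
proof -
  have "(\<Sum>k=1..m. g k * (u (Suc m - k) - u (m - k))) \<ge> 0"
  proof (rule sum_nonneg)
    fix k assume k: "k \<in> {1..m}"
    then have "Suc m - k = Suc (m - k)" by auto
    with k u_decr[of "m - k"] have "u (Suc m - k) - u (m - k) \<le> 0" by simp
    with g_nonpos k show "g k * (u (Suc m - k) - u (m - k)) \<ge> 0"
      by (simp add: mult_nonpos_nonpos)
  qed
  then show ?thesis
    using convolution_Suc_diff[of g u m] by linarith
qed

lemma harmonic_decrease_bound:
  fixes w :: "nat \<Rightarrow> real"
  assumes c: "c \<ge> 0"
    and decr: "\<And>n. w (Suc n) \<le> max 0 (w n - c / real (Suc n))"
  shows "w n \<le> max 0 (w 0 - c * harm n)"
proof (induction n)
  case 0
  then show ?case by (simp add: harm_expand)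
next
  case (Suc n)
  have "c * harm (Suc n) = c * harm n + c / real (Suc n)"
    by (simp add: harm_Suc algebra_simps divide_inverse)
  moreover have "c / real (Suc n) \<ge> 0"
    using c by simp
  ultimately show ?case
    using decr[of n] Suc.IH by (simp add: max_def split: if_splits)
qed

lemma harmonic_decrease_eventually_zero:
  fixes w :: "nat \<Rightarrow> real"
  assumes c: "c > 0"
    and w_nonneg: "\<And>n. w n \<ge> 0"
    and decr: "\<And>n. w (Suc n) \<le> max 0 (w n - c / real (Suc n))"
  shows "\<exists>N. \<forall>n\<ge>N. w n = 0"
proof -
  have "eventually (\<lambda>n. harm n > w 0 / c) sequentially"
    using harm_at_top filterlim_at_top_dense by blast
  then obtain N where N: "\<And>n. n \<ge> N \<Longrightarrow> harm n > w 0 / c"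
    by (auto simp: eventually_sequentially)
  have "w n = 0" if "n \<ge> N" for n
  proof -
    from N[OF that] c have "w 0 - c * harm n < 0"
      by (simp add: field_simps)
    with harmonic_decrease_bound[of c w n] c decr w_nonneg[of n] show ?thesis
      by simp
  qed
  then show ?thesis by blast
qed

locale opponent_process_control =
  fixes g ynat u y :: "nat \<Rightarrow> real" and ymin Kp Km \<delta> :: real
  assumes g0_pos: "g 0 > 0"
    and g_nonpos: "\<And>k. k \<ge> 1 \<Longrightarrow> g k \<le> 0"
    and Kp_pos: "Kp > 0"
    and Kp_g0_le: "Kp * g 0 \<le> 1"
    and delta_pos: "\<delta> > 0"
    and u0_nonneg: "u 0 \<ge> 0"
    and y1: "y 1 = g 0 * u 0 + ynat 1"
    and y1_ge: "y 1 \<ge> ymin"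
    and ynat_growth: "\<And>t. t \<ge> 1 \<Longrightarrow> ynat (t + 1) \<ge> ynat t - g t * u 0 + \<delta> / real t"
    and u_rec: "\<And>t. t \<ge> 1 \<Longrightarrow>
      u t = max 0 (u (t - 1) - Kp * pos_part (y t - ymin) - Km * neg_part (y t - ymin))"
    and y_rec: "\<And>t. t \<ge> 1 \<Longrightarrow> y (t + 1) = (\<Sum>k=0..t. g k * u (t - k)) + ynat (t + 1)"
begin

lemma u_nonneg: "u t \<ge> 0"
  using u0_nonneg u_rec by (cases t) auto

lemma u_Suc_above:
  assumes "y (Suc t) \<ge> ymin"
  shows "u (Suc t) = max 0 (u t - Kp * (y (Suc t) - ymin))"
  using assms u_rec[of "Suc t"] by (simp add: pos_part_def neg_part_def)

lemma u_Suc_le_above: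
  assumes "y (Suc t) \<ge> ymin"
  shows "u (Suc t) \<le> u t"
  using u_Suc_above[OF assms] assms u_nonneg[of t] Kp_pos by simp

lemma y_Suc: "y (Suc m) = (\<Sum>k=0..m. g k * u (m - k)) + ynat (Suc m)"
proof (cases m)
  case 0
  then show ?thesis using y1 by simp
next
  case (Suc n)
  then show ?thesis using y_rec[of m] by (simp del: sum.atLeast0_atMost_Suc)
qed

lemma y_Suc_Suc_ge:
  assumes above: "\<And>s. 1 \<le> s \<Longrightarrow> s \<le> Suc m \<Longrightarrow> y s \<ge> ymin"
  shows "y (Suc (Suc m)) \<ge> ymin + \<delta> / real (Suc m)"
proof -
  let ?e = "y (Suc m) - ymin"
  have e_nonneg: "?e \<ge> 0" using above[of "Suc m"] by simp
  have conv: "(\<Sum>k=0..Suc m. g k * u (Suc m - k)) - (\<Sum>k=0..m. g k * u (m - k))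
      \<ge> g 0 * (u (Suc m) - u m) + g (Suc m) * u 0"
    using g_nonpos above by (intro convolution_Suc_diff_ge u_Suc_le_above) auto
  have drift: "ynat (Suc (Suc m)) - ynat (Suc m) \<ge> - g (Suc m) * u 0 + \<delta> / real (Suc m)"
    using ynat_growth[of "Suc m"] by simp
  have "- ?e \<le> - (Kp * g 0) * ?e"
    using mult_right_mono[OF Kp_g0_le e_nonneg] by simp
  also have "\<dots> \<le> g 0 * (u (Suc m) - u m)"
    using u_Suc_above[of m] e_nonneg g0_pos
      mult_left_mono[of "- Kp * ?e" "u (Suc m) - u m" "g 0"]
    by (simp add: algebra_simps)
  finally have "g 0 * (u (Suc m) - u m) \<ge> - ?e" .
  with conv drift y_Suc[of m] y_Suc[of "Suc m"] show ?thesis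
    by simp
qed

lemma y_ge_ymin: "t \<ge> 1 \<Longrightarrow> y t \<ge> ymin"
proof (induction t rule: less_induct)
  case (less t)
  show ?case
  proof (cases "t \<le> 1")
    case True
    with less.prems y1_ge show ?thesis by simp
  next
    case False
    define m where "m = t - 2"
    with False have t: "t = Suc (Suc m)" by simp
    have "y t \<ge> ymin + \<delta> / real (Suc m)"
      unfolding t using less.IH t by (intro y_Suc_Suc_ge) auto
    moreover have "\<delta> / real (Suc m) > 0"
      using delta_pos by simp
    ultimately show ?thesis by linarith
  qed
qed

lemma u_Suc_le: "u (Suc t) \<le> u t"
  using u_Suc_le_above y_ge_ymin by simp

lemma u_eventually_zero: "\<exists>T0. \<forall>t\<ge>T0. u t = 0"
proof -
  have "u (Suc (Suc n)) \<le> max 0 (u (Suc n) - Kp * \<delta> / real (Suc n))" for n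
  proof -
    have "Kp * (y (Suc (Suc n)) - ymin) \<ge> Kp * (\<delta> / real (Suc n))"
      using y_Suc_Suc_ge[of n] y_ge_ymin Kp_pos by (intro mult_left_mono) auto
    then show ?thesis
      using u_Suc_above[of "Suc n"] y_ge_ymin[of "Suc (Suc n)"] by auto
  qed
  then obtain N where "\<forall>n\<ge>N. u (Suc n) = 0"
    using harmonic_decrease_eventually_zero[of "Kp * \<delta>" "\<lambda>n. u (Suc n)"] Kp_pos delta_pos u_nonneg
    by auto
  then have "\<forall>t\<ge>Suc N. u t = 0"
    by (metis Suc_le_D Suc_le_mono)
  then show ?thesis by blast
qed

end

theorem proposition2:
  fixes g ynat u y :: "nat \<Rightarrow> real" and ymin Kp Km \<delta> :: real
  assumes g0: "g 0 > 0"
    and gneg: "\<forall>k\<ge>1. g k \<le> 0"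
    and Kp: "0 < Kp" "Kp \<le> 1 / g 0" "1 / g 0 \<le> Km"
    and delta: "\<delta> > 0"
    and u0: "u 0 \<ge> 0"
    and y1: "y 1 = g 0 * u 0 + ynat 1"
    and y1_ge: "y 1 \<ge> ymin"
    and ynat: "\<forall>t\<ge>1. ynat (t + 1) \<ge> ynat t - g t * u 0 + \<delta> / real t"
    and u_rec: "\<forall>t\<ge>1. u t = max 0 (u (t - 1) - Kp * pos_part (y t - ymin) - Km * neg_part (y t - ymin))"
    and y_rec: "\<forall>t\<ge>1. y (t + 1) = (\<Sum>k=0..t. g k * u (t - k)) + ynat (t + 1)"
  shows "(\<forall>t\<ge>1. u t \<le> u (t - 1)) \<and> (\<forall>t\<ge>1. y t \<ge> ymin) \<and> (\<exists>T0. \<forall>t\<ge>T0. u t = 0)"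
proof -
  have "Kp * g 0 \<le> 1"
    using Kp g0 by (simp add: field_simps)
  then interpret opponent_process_control g ynat u y ymin Kp Km \<delta>
    using assms by unfold_locales auto
  have "u t \<le> u (t - 1)" if "t \<ge> 1" for t
    using that u_Suc_le[of "t - 1"] by simp
  then show ?thesis
    using y_ge_ymin u_eventually_zero by blast
qed

end
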